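(* Two elements $a,b\in C\ell_2\setminus\{0\}$ are pseudosimilar if and only if one of the following holds: (1) $\bar a+b=0$; (2) $H_a=H_b$ and $H_{\bar a+b}\neq 0$.
   Context: $C\ell_2$ is the 4-dimensional real associative algebra with basis $1,e_1,e_2,e_3$ and multiplication $e_1^2=e_2^2=1$, $e_3^2=-1$, $e_1e_2=e_3=-e_2e_1$, $e_1e_3=e_2=-e_3e_1$, $e_3e_2=e_1=-e_2e_3$. For $a=a_0+a_1e_1+a_2e_2+a_3e_3$ ($a_i\in\mathbb{R}$): $\bar a=a_0-a_1e_1-a_2e_2-a_3e_3$, $H_a=a\bar a=a_0^2-a_1^2-a_2^2+a_3^2$. $Z(C\ell_2)=\{a:H_a=0\}$. Elements $a,b$ are pseudosimilar if there exists $u\in C\ell_2\setminus Z(C\ell_2)$ with $au=\bar u b$. *)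

theory Defs
  imports Main "HOL.Real"
begin

text \<open>Elements of Cl_2: a = a0 + a1 e1 + a2 e2 + a3 e3, stored as coefficient quadruples.\<close>
datatype cl2 = Cl2 (c0: real) (c1: real) (c2: real) (c3: real)

definition cl2_zero :: cl2 where "cl2_zero = Cl2 0 0 0 0"

definition cl2_add :: "cl2 \<Rightarrow> cl2 \<Rightarrow> cl2" where
  "cl2_add a b = Cl2 (c0 a + c0 b) (c1 a + c1 b) (c2 a + c2 b) (c3 a + c3 b)"

text \<open>Multiplication from e1^2=e2^2=1, e3^2=-1, e1e2=e3=-e2e1, e1e3=e2=-e3e1, e3e2=e1=-e2e3.\<close>
definition cl2_mult :: "cl2 \<Rightarrow> cl2 \<Rightarrow> cl2" where
  "cl2_mult a b = Cl2
     (c0 a * c0 b + c1 a * c1 b + c2 a * c2 b - c3 a * c3 b)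
     (c0 a * c1 b + c1 a * c0 b - c2 a * c3 b + c3 a * c2 b)
     (c0 a * c2 b + c2 a * c0 b + c1 a * c3 b - c3 a * c1 b)
     (c0 a * c3 b + c3 a * c0 b + c1 a * c2 b - c2 a * c1 b)"

definition cl2_conj :: "cl2 \<Rightarrow> cl2" where
  "cl2_conj a = Cl2 (c0 a) (- c1 a) (- c2 a) (- c3 a)"

text \<open>H_a = a * conj a = a0^2 - a1^2 - a2^2 + a3^2 (a real scalar).\<close>
definition cl2_H :: "cl2 \<Rightarrow> real" where
  "cl2_H a = (c0 a)^2 - (c1 a)^2 - (c2 a)^2 + (c3 a)^2"

definition cl2_Z :: "cl2 set" where
  "cl2_Z = {a. cl2_H a = 0}"

definition pseudosimilar :: "cl2 \<Rightarrow> cl2 \<Rightarrow> bool" where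
  "pseudosimilar a b \<longleftrightarrow> (\<exists>u. u \<notin> cl2_Z \<and> cl2_mult a u = cl2_mult (cl2_conj u) b)"

end

(* Cl_2 is a real algebra on which bar is an anti-involution with a bar a = bar a a = H_a, so H is
   multiplicative. If a u = bar u b with H_u <> 0, then H_a = H_b, and
   bar u (bar a + b) = bar (a u) + a u is real, so bar a + b is a real multiple of u: either it
   vanishes or it is non-null. Conversely, u = bar a + b is a witness when H_a = H_b, and for
   b = - bar a any non-null u with a u of zero scalar part is one. *)
theory Submission
  imports Defs "HOL.Real_Vector_Spaces"
begin

instantiation cl2 :: real_algebra_1
begin

definition zero_cl2_def: "0 = cl2_zero"
definition one_cl2_def: "1 = Cl2 1 0 0 0"
definition plus_cl2_def: "x + y = cl2_add x y"
definition times_cl2_def: "x * y = cl2_mult x y"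
definition uminus_cl2_def: "- x = Cl2 (- c0 x) (- c1 x) (- c2 x) (- c3 x)"
definition minus_cl2_def: "x - y = x + - (y :: cl2)"
definition scaleR_cl2_def: "scaleR r x = Cl2 (r * c0 x) (r * c1 x) (r * c2 x) (r * c3 x)"

instance
  by standard
    (simp_all add: cl2.expand zero_cl2_def one_cl2_def plus_cl2_def times_cl2_def uminus_cl2_def
      minus_cl2_def scaleR_cl2_def cl2_zero_def cl2_add_def cl2_mult_def algebra_simps)

end

lemma of_real_cl2: "of_real r = Cl2 r 0 0 0"
  by (simp add: of_real_def scaleR_cl2_def one_cl2_def)

lemma cl2_conj_conj [simp]: "cl2_conj (cl2_conj x) = x"
  by (simp add: cl2_conj_def)

lemma cl2_conj_add: "cl2_conj (x + y) = cl2_conj x + cl2_conj y"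
  by (simp add: cl2_conj_def plus_cl2_def cl2_add_def)

lemma cl2_conj_mult: "cl2_conj (x * y) = cl2_conj y * cl2_conj x"
  by (simp add: cl2_conj_def times_cl2_def cl2_mult_def algebra_simps)

lemma cl2_mult_conj_right: "x * cl2_conj x = of_real (cl2_H x)"
  by (simp add: cl2_conj_def times_cl2_def cl2_mult_def cl2_H_def of_real_cl2 power2_eq_square
      algebra_simps)

lemma cl2_mult_conj_left: "cl2_conj x * x = of_real (cl2_H x)"
  by (simp add: cl2_conj_def times_cl2_def cl2_mult_def cl2_H_def of_real_cl2 power2_eq_square
      algebra_simps)

lemma cl2_add_conj_self: "x + cl2_conj x = of_real (2 * c0 x)"
  by (simp add: cl2_conj_def plus_cl2_def cl2_add_def of_real_cl2)

lemma cl2_H_conj: "cl2_H (cl2_conj x) = cl2_H x"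
  by (simp add: cl2_conj_def cl2_H_def)

lemma cl2_H_mult: "cl2_H (x * y) = cl2_H x * cl2_H y"
  by (simp add: cl2_H_def times_cl2_def cl2_mult_def power2_eq_square algebra_simps)

lemma cl2_H_scaleR: "cl2_H (scaleR r x) = r\<^sup>2 * cl2_H x"
  by (simp add: cl2_H_def scaleR_cl2_def power_mult_distrib algebra_simps)

lemma cl2_scaleR_null_imp_zero:
  assumes "cl2_H u \<noteq> 0" and "cl2_H (scaleR r u) = 0"
  shows "scaleR r u = 0"
proof -
  have "r = 0"
    using assms by (simp add: cl2_H_scaleR)
  then show ?thesis by simp
qed

lemma pseudosimilar_imp_H_eq:
  assumes "cl2_H u \<noteq> 0" and "a * u = cl2_conj u * b"
  shows "cl2_H a = cl2_H b"
proof -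
  have "cl2_H a * cl2_H u = cl2_H b * cl2_H u"
    using assms(2) by (metis cl2_H_mult cl2_H_conj mult.commute)
  then show ?thesis
    using assms(1) by simp
qed

lemma pseudosimilar_imp_sum_scaleR:
  assumes "cl2_H u \<noteq> 0" and "a * u = cl2_conj u * b"
  obtains r where "cl2_conj a + b = scaleR r u"
proof -
  define w where "w = cl2_conj a + b"
  define s where "s = 2 * c0 (a * u)"
  have "cl2_conj u * w = cl2_conj (a * u) + cl2_conj u * b"
    by (simp add: w_def distrib_left cl2_conj_mult)
  also have "\<dots> = cl2_conj (a * u) + a * u"
    by (simp add: assms(2))
  also have "\<dots> = of_real s"
    by (simp add: s_def add.commute cl2_add_conj_self)
  finally have conj_u_w: "cl2_conj u * w = of_real s" .
  have "scaleR (cl2_H u) w = (u * cl2_conj u) * w"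
    by (simp add: cl2_mult_conj_right scaleR_conv_of_real)
  also have "\<dots> = scaleR s u"
    by (simp add: mult.assoc conj_u_w of_real_def)
  finally have "w = scaleR (s / cl2_H u) u"
    using assms(1) by (simp add: eq_vector_fraction_iff)
  then show thesis
    unfolding w_def by (rule that)
qed

lemma pseudosimilar_if_H_eq:
  assumes "cl2_H a = cl2_H b" and "cl2_H (cl2_conj a + b) \<noteq> 0"
  shows "pseudosimilar a b"
proof -
  have "a * (cl2_conj a + b) = cl2_conj (cl2_conj a + b) * b"
    using assms(1)
    by (simp add: distrib_left distrib_right cl2_conj_add cl2_mult_conj_right cl2_mult_conj_left
        add.commute)
  then show ?thesis
    using assms(2) by (auto simp: pseudosimilar_def cl2_Z_def times_cl2_def)
qed

lemma exists_nonnull_scalar_part_zero: "\<exists>u. cl2_H u \<noteq> 0 \<and> c0 (a * u) = 0"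
proof (cases "c0 a = 0")
  case True
  then show ?thesis
    by (intro exI[of _ 1]) (simp add: one_cl2_def cl2_H_def times_cl2_def cl2_mult_def)
next
  case False
  then have "(c3 a)\<^sup>2 + (c0 a)\<^sup>2 \<noteq> 0"
    by simp
  then show ?thesis
    by (intro exI[of _ "Cl2 (c3 a) 0 0 (c0 a)"]) (simp add: cl2_H_def times_cl2_def cl2_mult_def)
qed

lemma pseudosimilar_minus_conj: "pseudosimilar a (- cl2_conj a)"
proof -
  obtain u where u: "cl2_H u \<noteq> 0" "c0 (a * u) = 0"
    using exists_nonnull_scalar_part_zero by blast
  then have "a * u + cl2_conj (a * u) = 0"
    by (simp add: cl2_add_conj_self)
  then have "a * u = cl2_conj u * - cl2_conj a"
    by (simp add: cl2_conj_mult add_eq_0_iff2)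
  then show ?thesis
    using u(1) by (auto simp: pseudosimilar_def cl2_Z_def times_cl2_def)
qed

lemma pseudosimilar_iff:
  "pseudosimilar a b \<longleftrightarrow>
     cl2_conj a + b = 0 \<or> (cl2_H a = cl2_H b \<and> cl2_H (cl2_conj a + b) \<noteq> 0)"
proof
  assume "pseudosimilar a b"
  then obtain u where u: "cl2_H u \<noteq> 0" "a * u = cl2_conj u * b"
    by (auto simp: pseudosimilar_def cl2_Z_def times_cl2_def)
  obtain r where "cl2_conj a + b = scaleR r u"
    using pseudosimilar_imp_sum_scaleR[OF u] .
  then show "cl2_conj a + b = 0 \<or> (cl2_H a = cl2_H b \<and> cl2_H (cl2_conj a + b) \<noteq> 0)"
    using pseudosimilar_imp_H_eq[OF u] cl2_scaleR_null_imp_zero[OF u(1)] by metis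
next
  assume "cl2_conj a + b = 0 \<or> (cl2_H a = cl2_H b \<and> cl2_H (cl2_conj a + b) \<noteq> 0)"
  then show "pseudosimilar a b"
    using pseudosimilar_minus_conj pseudosimilar_if_H_eq by (metis add_eq_0_iff)
qed

theorem theorem5p3:
  fixes a b :: cl2
  assumes "a \<noteq> cl2_zero" and "b \<noteq> cl2_zero"
  shows "pseudosimilar a b \<longleftrightarrow>
           (cl2_add (cl2_conj a) b = cl2_zero \<or>
            (cl2_H a = cl2_H b \<and> cl2_H (cl2_add (cl2_conj a) b) \<noteq> 0))"
  by (simp add: pseudosimilar_iff flip: plus_cl2_def zero_cl2_def)

end
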